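(* Let $\phi$ be a characteristic function and let $u\in\mathbb{R}\setminus\{0\}$ be such that $0<|\phi(u)|<1$. Let $\tilde\phi(u)\in\mathbb{C}$ be an arbitrary (possibly random) estimate of $\phi(u)$. Define $$\mathcal{Y}(u)=\log\bigl(-\log(|\phi(u)|^2)\bigr),\qquad \tilde{\mathcal{Y}}(u)=\log\bigl(-\log(T_{\omega_-,\omega_+}[|\tilde\phi|^2](u))\bigr),$$ $$\omega_\pm^*(u)=|\phi(u)|^2\Bigl(1\pm\frac{2|\log|\phi(u)||}{1+2|\log|\phi(u)||}\Bigr).$$ Then for any truncation levels $\omega_-(u),\omega_+(u)$ satisfying $$0<\omega_-(u)\le\omega_-^*(u)\le\omega_+^*(u)\le\omega_+(u)<1,$$ the following inequality holds with probability one: $$\bigl|\tilde{\mathcal{Y}}(u)-\mathcal{Y}(u)-\zeta_1(u)\bigl(|\tilde\phi(u)|^2-|\phi(u)|^2\bigr)\bigr|\le\zeta_2(u)\bigl(|\tilde\phi(u)|^2-|\phi(u)|^2\bigr)^2,$$ where $$\zeta_1(u)=2^{-1}|\phi(u)|^{-2}\log^{-1}(|\phi(u)|),\qquad \zeta_2(u)=2\max_{\xi\in\{\omega_-(u),\omega_+(u)\}}\Bigl[\frac{1+|\log\xi|}{\xi^2\log^2\xi}\Bigr].$$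
   Context: For truncation levels $0<\omega_-\le\omega_+<1$ and a real-valued function $f$, the truncation operator is $T_{\omega_-,\omega_+}[f](u)=\omega_+$ if $f(u)>\omega_+$, $=f(u)$ if $\omega_-\le f(u)\le\omega_+$, and $=\omega_-$ if $f(u)<\omega_-$ (the levels may depend on $u$). *)

theory Defs
  imports "HOL-Probability.Probability"
begin

text \<open>Truncation operator T at a fixed point u, with levels wm = omega_-(u), wp = omega_+(u).\<close>
definition trunc_op :: "real \<Rightarrow> real \<Rightarrow> real \<Rightarrow> real" where
  "trunc_op wm wp x = (if x > wp then wp else if x < wm then wm else x)"

end

theory Submission
  imports Defs
begin

text \<open>Write \<open>p = |\<phi>(u)|\<^sup>2\<close> and \<open>g(y) = ln (- ln y)\<close>, so \<open>\<zeta>\<^sub>1 = g'(p)\<close>. On \<open>(0,1)\<close> the second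
  derivative of \<open>g\<close> is bounded by \<open>K(y) = (1 - ln y) / (y ln y)\<^sup>2\<close>, and \<open>K\<close> is quasiconvex, so on
  the truncation window \<open>[\<omega>\<^sub>-, \<omega>\<^sub>+]\<close> it is bounded by \<open>H = max (K \<omega>\<^sub>-) (K \<omega>\<^sub>+) = \<zeta>\<^sub>2 / 2\<close>; Taylor's
  theorem then controls the error inside the window. Outside the window the truncated value is
  a window endpoint, and the extra linear term \<open>g'(p) (x - w)\<close> is quadratically small because
  \<open>x\<close> is then at distance at least \<open>d = p L / (1 + L)\<close> (\<open>L = - ln p\<close>) from \<open>p\<close>, where
  \<open>|g'(p)| = K(p) d \<le> H d\<close>.\<close>

lemma taylor_remainder_bound:
  fixes f f' f'' :: "real \<Rightarrow> real"
  assumes f': "\<And>t. a \<le> t \<Longrightarrow> t \<le> b \<Longrightarrow> DERIV f t :> f' t"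
    and f'': "\<And>t. a \<le> t \<Longrightarrow> t \<le> b \<Longrightarrow> DERIV f' t :> f'' t"
    and bound: "\<And>t. a \<le> t \<Longrightarrow> t \<le> b \<Longrightarrow> \<bar>f'' t\<bar> \<le> H"
    and x: "a \<le> x" "x \<le> b" and c: "a \<le> c" "c \<le> b"
  shows "\<bar>f x - f c - f' c * (x - c)\<bar> \<le> H / 2 * (x - c)\<^sup>2"
proof (cases "x = c")
  case False
  define diff where "diff = (\<lambda>m::nat. if m = 0 then f else if m = 1 then f' else f'')"
  have "\<forall>m t. m < 2 \<and> a \<le> t \<and> t \<le> b \<longrightarrow> DERIV (diff m) t :> diff (Suc m) t"
    using f' f'' by (auto simp: diff_def less_2_cases_iff)
  from Taylor[of 2 diff f, OF _ _ this c x False]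
  obtain t where t: "if x < c then x < t \<and> t < c else c < t \<and> t < x"
    and expansion: "f x = f c + f' c * (x - c) + f'' t / 2 * (x - c)\<^sup>2"
    by (auto simp: diff_def numeral_2_eq_2)
  have "a \<le> t" "t \<le> b" using t x c by (auto split: if_splits)
  then have "\<bar>f'' t\<bar> / 2 * (x - c)\<^sup>2 \<le> H / 2 * (x - c)\<^sup>2"
    using bound by (intro mult_right_mono divide_right_mono) auto
  then show ?thesis using expansion by (simp add: abs_mult)
qed simp

text \<open>A function whose derivative, once positive, stays positive decreases and then increases,
  so it never exceeds its values at the endpoints.\<close>
lemma le_max_endpoints_if_deriv_pos_persists:
  fixes f f' :: "real \<Rightarrow> real"
  assumes z: "a \<le> z" "z \<le> b"
    and deriv: "\<And>t. a \<le> t \<Longrightarrow> t \<le> b \<Longrightarrow> DERIV f t :> f' t"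
    and persists: "\<And>s t. a < s \<Longrightarrow> s < t \<Longrightarrow> t < b \<Longrightarrow> 0 < f' s \<Longrightarrow> 0 < f' t"
  shows "f z \<le> max (f a) (f b)"
proof (rule ccontr)
  assume "\<not> ?thesis"
  then have above_a: "f a < f z" and above_b: "f b < f z" by auto
  then have "a < z" "z < b" using z by (auto simp: order.order_iff_strict)
  obtain s where s: "a < s" "s < z" "f z - f a = (z - a) * f' s"
    using MVT2[OF \<open>a < z\<close>, of f f'] deriv z by force
  obtain t where t: "z < t" "t < b" "f b - f z = (b - z) * f' t"
    using MVT2[OF \<open>z < b\<close>, of f f'] deriv z by force
  have "0 < f' s" using s above_a \<open>a < z\<close> by (metis diff_gt_0_iff_gt zero_less_mult_pos)
  then have "0 < f' t" using persists s t by simp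
  then have "0 < (b - z) * f' t" using \<open>z < b\<close> by simp
  then show False using t above_b by linarith
qed

lemma trunc_op_linearization_bound:
  fixes f :: "real \<Rightarrow> real"
  assumes remainder: "\<And>y. wm \<le> y \<Longrightarrow> y \<le> wp \<Longrightarrow> \<bar>f y - f p - D * (y - p)\<bar> \<le> H / 2 * (y - p)\<^sup>2"
    and window: "wm \<le> p - d" "p + d \<le> wp" "0 \<le> d"
    and slope: "\<bar>D\<bar> \<le> H * d" and "0 \<le> H"
  shows "\<bar>f (trunc_op wm wp x) - f p - D * (x - p)\<bar> \<le> 3 / 2 * H * (x - p)\<^sup>2"
proof -
  define w where "w = trunc_op wm wp x"
  have w: "wm \<le> w" "w \<le> wp" and closer: "\<bar>w - p\<bar> \<le> \<bar>x - p\<bar>"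
    using window by (auto simp: w_def trunc_op_def)
  have "\<bar>f w - f p - D * (w - p)\<bar> \<le> H / 2 * (w - p)\<^sup>2"
    using remainder w by simp
  also have "\<dots> \<le> H / 2 * (x - p)\<^sup>2"
    using closer \<open>0 \<le> H\<close> by (intro mult_left_mono) (auto simp: abs_le_square_iff)
  finally have inside: "\<bar>f w - f p - D * (w - p)\<bar> \<le> H / 2 * (x - p)\<^sup>2" .
  have outside: "\<bar>D * (x - w)\<bar> \<le> H * (x - p)\<^sup>2"
  proof (cases "w = x")
    case False
    then have far: "d \<le> \<bar>x - p\<bar>" and "\<bar>x - w\<bar> \<le> \<bar>x - p\<bar>"
      using window by (auto simp: w_def trunc_op_def split: if_splits)
    then have "\<bar>D\<bar> * \<bar>x - w\<bar> \<le> H * d * \<bar>x - p\<bar>"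
      using slope \<open>0 \<le> H\<close> window by (intro mult_mono) auto
    also have "\<dots> \<le> H * (\<bar>x - p\<bar> * \<bar>x - p\<bar>)"
      using mult_right_mono[OF far, of "\<bar>x - p\<bar>"] \<open>0 \<le> H\<close>
      by (simp add: mult_left_mono mult.assoc)
    also have "\<dots> = H * (x - p)\<^sup>2" by (simp add: power2_eq_square)
    finally show ?thesis by (simp add: abs_mult)
  qed (use \<open>0 \<le> H\<close> in simp)
  have "f w - f p - D * (x - p) = (f w - f p - D * (w - p)) - D * (x - w)"
    by (simp add: algebra_simps)
  then show ?thesis using inside outside unfolding w_def[symmetric] by linarith
qed

definition loglog_curv :: "real \<Rightarrow> real" where
  "loglog_curv y = (1 - ln y) / (y * ln y)\<^sup>2"

lemma loglog_curv_eq: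
  fixes y :: real
  assumes "0 < y" "y < 1"
  shows "loglog_curv y = (1 + \<bar>ln y\<bar>) / (y\<^sup>2 * (ln y)\<^sup>2)"
  using assms by (simp add: loglog_curv_def power_mult_distrib)

lemma loglog_curv_nonneg:
  fixes y :: real
  assumes "0 < y" "y < 1"
  shows "0 \<le> loglog_curv y"
proof -
  have "ln y < 0" using assms by simp
  then show ?thesis unfolding loglog_curv_def by simp
qed

lemma DERIV_ln_neg_ln:
  fixes y :: real
  assumes "0 < y" "y < 1"
  shows "DERIV (\<lambda>y. ln (- ln y)) y :> 1 / (y * ln y)"
proof -
  have "DERIV (\<lambda>y. ln (- ln y)) y :> 1 / (- ln y) * (- (1 / y))"
    using assms by (auto intro!: derivative_eq_intros)
  then show ?thesis by (simp add: field_simps)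
qed

lemma DERIV_inverse_mult_ln:
  fixes y :: real
  assumes "0 < y" "y < 1"
  shows "DERIV (\<lambda>y. 1 / (y * ln y)) y :> - (1 + ln y) / (y * ln y)\<^sup>2"
proof -
  have "ln y < 0" using assms by simp
  have "DERIV (\<lambda>y. 1 / (y * ln y)) y :> - (1 * ln y + y * (1 / y)) / (y * ln y)\<^sup>2"
    using assms \<open>ln y < 0\<close> by (auto intro!: derivative_eq_intros simp: power2_eq_square)
  then show ?thesis using assms by (simp add: algebra_simps)
qed

lemma abs_second_deriv_ln_neg_ln_le:
  fixes y :: real
  assumes "0 < y" "y < 1"
  shows "\<bar>- (1 + ln y) / (y * ln y)\<^sup>2\<bar> \<le> loglog_curv y"
proof -
  have "ln y < 0" using assms by simp
  then have "\<bar>1 + ln y\<bar> \<le> 1 - ln y" unfolding abs_le_iff by linarith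
  then show ?thesis unfolding loglog_curv_def abs_divide abs_minus_cancel
    by (simp add: divide_right_mono)
qed

lemma DERIV_loglog_curv:
  fixes y :: real
  assumes "0 < y" "y < 1"
  shows "DERIV loglog_curv y :> - (2 + ln y - 2 * (ln y)\<^sup>2) / (y * ln y)^3"
proof -
  have "ln y < 0" using assms by simp
  have "DERIV loglog_curv y :>
      (- (1 / y) * (y * ln y)\<^sup>2 - (1 - ln y) * (2 * (y * ln y) * (ln y + y * (1 / y))))
        / ((y * ln y)\<^sup>2)\<^sup>2"
    unfolding loglog_curv_def using assms \<open>ln y < 0\<close>
    by (auto intro!: derivative_eq_intros)
  moreover have "(- (1 / y) * (y * ln y)\<^sup>2 - (1 - ln y) * (2 * (y * ln y) * (ln y + y * (1 / y))))
        / ((y * ln y)\<^sup>2)\<^sup>2 = - (2 + ln y - 2 * (ln y)\<^sup>2) / (y * ln y)^3"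
    using assms \<open>ln y < 0\<close> by (simp add: field_simps power2_eq_square power3_eq_cube)
  ultimately show ?thesis by simp
qed

lemma loglog_curv_le_max:
  assumes "0 < a" "a \<le> y" "y \<le> b" "b < 1"
  shows "loglog_curv y \<le> max (loglog_curv a) (loglog_curv b)"
proof (rule le_max_endpoints_if_deriv_pos_persists
    [where f = loglog_curv and f' = "\<lambda>t. - (2 + ln t - 2 * (ln t)\<^sup>2) / (t * ln t)^3"])
  show "DERIV loglog_curv t :> - (2 + ln t - 2 * (ln t)\<^sup>2) / (t * ln t)^3" if "a \<le> t" "t \<le> b" for t
    using DERIV_loglog_curv that assms by simp
next
  fix s t :: real
  assume st: "a < s" "s < t" "t < b" and pos: "0 < - (2 + ln s - 2 * (ln s)\<^sup>2) / (s * ln s)^3"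
  have "ln s < ln t" "ln t < 0" using st assms by auto
  then have "(ln t)\<^sup>2 < (ln s)\<^sup>2" using power_strict_mono[of "- ln t" "- ln s" 2] by simp
  moreover have "s * ln s < 0" "t * ln t < 0"
    using st assms by (auto simp: mult_pos_neg)
  then have "(s * ln s)^3 < 0" "(t * ln t)^3 < 0" by (simp_all add: power_less_zero_eq)
  ultimately show "0 < - (2 + ln t - 2 * (ln t)\<^sup>2) / (t * ln t)^3"
    using pos \<open>ln s < ln t\<close> by (simp add: divide_less_0_iff zero_less_divide_iff)
qed (use assms in auto)

lemma trunc_op_ln_neg_ln_bound:
  fixes p wm wp x :: real
  defines "d \<equiv> p * - ln p / (1 - ln p)"
  assumes p: "0 < p" "p < 1"
    and window: "0 < wm" "wm \<le> p - d" "p + d \<le> wp" "wp < 1"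
  shows "\<bar>ln (- ln (trunc_op wm wp x)) - ln (- ln p) - (x - p) / (p * ln p)\<bar>
           \<le> 3 / 2 * max (loglog_curv wm) (loglog_curv wp) * (x - p)\<^sup>2"
proof -
  define H where "H = max (loglog_curv wm) (loglog_curv wp)"
  define L where "L = - ln p"
  have "0 < L" using p by (simp add: L_def)
  have ln_p: "ln p = - L" and d: "d = p * L / (1 + L)" by (simp_all add: L_def d_def)
  have "0 \<le> d" using p \<open>0 < L\<close> by (simp add: d)
  then have in_window: "wm \<le> p" "p \<le> wp" using window by linarith+
  have curv: "\<bar>- (1 + ln t) / (t * ln t)\<^sup>2\<bar> \<le> H" if "wm \<le> t" "t \<le> wp" for t
    using abs_second_deriv_ln_neg_ln_le[of t] loglog_curv_le_max[of wm t wp] that window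
    by (force simp: H_def)
  have "\<bar>ln (- ln y) - ln (- ln p) - 1 / (p * ln p) * (y - p)\<bar> \<le> H / 2 * (y - p)\<^sup>2"
    if "wm \<le> y" "y \<le> wp" for y
    using window in_window that
    by (intro taylor_remainder_bound[OF DERIV_ln_neg_ln DERIV_inverse_mult_ln curv]) auto
  moreover have "\<bar>1 / (p * ln p)\<bar> = loglog_curv p * d"
  proof -
    have "\<bar>1 / (p * ln p)\<bar> = 1 / (p * L)" using p \<open>0 < L\<close> by (simp add: ln_p abs_mult)
    also have "\<dots> = (1 + L) / (p * L)\<^sup>2 * (p * L / (1 + L))"
      using p \<open>0 < L\<close> by (simp add: power2_eq_square)
    finally show ?thesis by (simp add: loglog_curv_def ln_p d)
  qed
  moreover have "loglog_curv p \<le> H"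
    using loglog_curv_le_max[of wm p wp] in_window window by (simp add: H_def)
  moreover have "0 \<le> loglog_curv p"
    using p by (rule loglog_curv_nonneg)
  ultimately have "\<bar>ln (- ln (trunc_op wm wp x)) - ln (- ln p) - 1 / (p * ln p) * (x - p)\<bar>
      \<le> 3 / 2 * H * (x - p)\<^sup>2"
    using window \<open>0 \<le> d\<close> by (intro trunc_op_linearization_bound[where d = d]) (auto intro: mult_right_mono)
  then show ?thesis by (simp add: H_def)
qed

text \<open>The bound is a deterministic statement about the number \<open>|\<phi>(u)| \<in> (0,1)\<close> and the value
  \<open>|\<phi>~(u)|\<^sup>2\<close>.\<close>
theorem lemma6p1:
  fixes M :: "real measure" and u :: real and est :: complex and wm wp :: real
  assumes "real_distribution M"
    and "u \<noteq> 0"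
    and "0 < cmod (char M u)" and "cmod (char M u) < 1"
  defines "Y \<equiv> ln (- ln ((cmod (char M u))\<^sup>2))"
    and "Yt \<equiv> ln (- ln (trunc_op wm wp ((cmod est)\<^sup>2)))"
    and "om_minus \<equiv> (cmod (char M u))\<^sup>2 *
           (1 - 2 * \<bar>ln (cmod (char M u))\<bar> / (1 + 2 * \<bar>ln (cmod (char M u))\<bar>))"
    and "om_plus \<equiv> (cmod (char M u))\<^sup>2 *
           (1 + 2 * \<bar>ln (cmod (char M u))\<bar> / (1 + 2 * \<bar>ln (cmod (char M u))\<bar>))"
    and "zeta1 \<equiv> 1 / (2 * (cmod (char M u))\<^sup>2 * ln (cmod (char M u)))"
    and "zeta2 \<equiv> 2 * max ((1 + \<bar>ln wm\<bar>) / (wm\<^sup>2 * (ln wm)\<^sup>2))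
                          ((1 + \<bar>ln wp\<bar>) / (wp\<^sup>2 * (ln wp)\<^sup>2))"
  assumes "0 < wm" and "wm \<le> om_minus" and "om_minus \<le> om_plus"
    and "om_plus \<le> wp" and "wp < 1"
  shows "\<bar>Yt - Y - zeta1 * ((cmod est)\<^sup>2 - (cmod (char M u))\<^sup>2)\<bar>
           \<le> zeta2 * ((cmod est)\<^sup>2 - (cmod (char M u))\<^sup>2)\<^sup>2"
proof -
  define c where "c = cmod (char M u)"
  define p where "p = c\<^sup>2"
  define x where "x = (cmod est)\<^sup>2"
  have "0 < c" "c < 1" using assms(3,4) by (simp_all add: c_def)
  then have p: "0 < p" "p < 1" and ln_p: "ln p = 2 * ln c" and "ln c < 0"
    by (simp_all add: p_def ln_realpow power_less_one_iff)
  have window: "om_minus = p - p * - ln p / (1 - ln p)" "om_plus = p + p * - ln p / (1 - ln p)"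
    unfolding om_minus_def om_plus_def c_def[symmetric] p_def[symmetric]
    using \<open>ln c < 0\<close> by (simp_all add: ln_p algebra_simps)
  have w: "0 < wm" "wm < 1" "0 < wp" "wp < 1" using assms(11-15) by linarith+
  define B where "B = max (loglog_curv wm) (loglog_curv wp)"
  have zeta1: "zeta1 * (x - p) = (x - p) / (p * ln p)"
    unfolding zeta1_def c_def[symmetric] p_def[symmetric] by (simp add: ln_p mult_ac)
  have zeta2: "zeta2 = 2 * B"
    unfolding zeta2_def B_def using loglog_curv_eq[of wm] loglog_curv_eq[of wp] w by simp
  have "0 \<le> B"
    unfolding B_def using loglog_curv_nonneg[of wp] w by (simp add: max.coboundedI2)
  have "\<bar>Yt - Y - (x - p) / (p * ln p)\<bar> \<le> 3 / 2 * B * (x - p)\<^sup>2"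
    unfolding Yt_def Y_def B_def x_def[symmetric] c_def[symmetric] p_def[symmetric]
    using assms(11-15) window by (intro trunc_op_ln_neg_ln_bound p) simp_all
  also have "\<dots> \<le> 2 * B * (x - p)\<^sup>2"
    using \<open>0 \<le> B\<close> by (intro mult_right_mono) auto
  finally show ?thesis
    unfolding zeta1[unfolded x_def] zeta2 x_def c_def[symmetric] p_def[symmetric] .
qed

end
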